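(* Let $D,W,V,K$ be positive integers, $N:=W+VK$. Fix $\sharp\in\{\mathrm{st},\mathrm{m}\}$ and index pairs $\theta^{(\sharp)}(1),\dots,\theta^{(\sharp)}(J)$, lying in $\{1,\dots,W\}^{\times2}$ if $\sharp=\mathrm{st}$ and in $\{1,\dots,VK\}^{\times2}$ if $\sharp=\mathrm{m}$. For $P=(P_{\mathrm{st}}\,|\,P_{\mathrm{m}})\in\mathbb{R}^{D\times N}$ with $P_{\mathrm{st}}\in\mathbb{R}^{D\times W}$, let $\mathcal{D}:=P_{\mathrm{st}}^TP_{\mathrm{m}}\in\mathbb{R}^{W\times VK}$ and $\mathcal{M}(P):=\bigl(\mathrm{vec}(\mathcal{N}^{(\sharp)}_1)\,|\cdots|\,\mathrm{vec}(\mathcal{N}^{(\sharp)}_J)\bigr)$ with $$\mathcal{N}^{(\mathrm{st})}_j:=\tfrac12\Bigl(\bigl(\mathcal{D}_{\theta^{(\mathrm{st})}(j)_1,1:D}\bigr)^T\mathcal{D}_{\theta^{(\mathrm{st})}(j)_2,1:D}+\bigl(\mathcal{D}_{\theta^{(\mathrm{st})}(j)_2,1:D}\bigr)^T\mathcal{D}_{\theta^{(\mathrm{st})}(j)_1,1:D}\Bigr),$$ $$\mathcal{N}^{(\mathrm{m})}_j:=\tfrac12\Bigl(\mathcal{D}_{1:D,\theta^{(\mathrm{m})}(j)_1}\bigl(\mathcal{D}_{1:D,\theta^{(\mathrm{m})}(j)_2}\bigr)^T+\mathcal{D}_{1:D,\theta^{(\mathrm{m})}(j)_2}\bigl(\mathcal{D}_{1:D,\theta^{(\mathrm{m})}(j)_1}\bigr)^T\Bigr).$$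 Then either every $P\in\mathbb{R}^{D\times N}$ satisfies $\mathrm{rank}(\mathcal{M}(P))<D(D+1)/2$, or Lebesgue-almost all $P\in\mathbb{R}^{D\times N}$ satisfy $\mathrm{rank}(\mathcal{M}(P))=D(D+1)/2$.
   Context: $\mathcal{D}_{i,1:D}$ is the row vector of the first $D$ entries of row $i$ of $\mathcal{D}$; $\mathcal{D}_{1:D,l}$ is the column vector of the first $D$ entries of column $l$ of $\mathcal{D}$. $\theta(j)_1,\theta(j)_2$ are the two components of the index pair $\theta(j)$. $\mathrm{vec}(X)$ stacks the columns of $X$ into a single column vector. *)

theory Defs
  imports "HOL-Analysis.Analysis" "Jordan_Normal_Form.DL_Rank"
begin

text \<open>Conventions: all indices are 0-based.  A matrix P in R^(D x N) is an element
  of the extensional function space on the index set {..<D} x {..<N}; Lebesgue measure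
  on R^(D x N) is the product of lborel over that index set.\<close>

datatype sharp = St | Mm

definition Pst :: "nat \<Rightarrow> nat \<Rightarrow> (nat \<times> nat \<Rightarrow> real) \<Rightarrow> real mat" where
  "Pst D W P = mat D W (\<lambda>(i,j). P (i, j))"

definition Pm :: "nat \<Rightarrow> nat \<Rightarrow> nat \<Rightarrow> (nat \<times> nat \<Rightarrow> real) \<Rightarrow> real mat" where
  "Pm D W VK P = mat D VK (\<lambda>(i,j). P (i, W + j))"

definition Dmat :: "nat \<Rightarrow> nat \<Rightarrow> nat \<Rightarrow> (nat \<times> nat \<Rightarrow> real) \<Rightarrow> real mat" where
  "Dmat D W VK P = transpose_mat (Pst D W P) * Pm D W VK P"

definition Nmat :: "sharp \<Rightarrow> nat \<Rightarrow> real mat \<Rightarrow> nat \<times> nat \<Rightarrow> real mat" where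
  "Nmat s D Dm ab = (case s of
     St \<Rightarrow> mat D D (\<lambda>(r,c). (1/2) * (Dm $$ (fst ab, r) * Dm $$ (snd ab, c)
                                    + Dm $$ (snd ab, r) * Dm $$ (fst ab, c)))
   | Mm \<Rightarrow> mat D D (\<lambda>(r,c). (1/2) * (Dm $$ (r, fst ab) * Dm $$ (c, snd ab)
                                    + Dm $$ (r, snd ab) * Dm $$ (c, fst ab))))"

definition vecm :: "real mat \<Rightarrow> real vec" where
  "vecm X = vec (dim_row X * dim_col X) (\<lambda>k. X $$ (k mod dim_row X, k div dim_row X))"

definition Mmat :: "sharp \<Rightarrow> nat \<Rightarrow> nat \<Rightarrow> nat \<Rightarrow> nat \<Rightarrow> (nat \<Rightarrow> nat \<times> nat)
     \<Rightarrow> (nat \<times> nat \<Rightarrow> real) \<Rightarrow> real mat" where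
  "Mmat s D W VK J theta P =
     mat_of_cols (D * D) (map (\<lambda>j. vecm (Nmat s D (Dmat D W VK P) (theta j))) [0..<J])"

definition mrank :: "real mat \<Rightarrow> nat" where
  "mrank A = vec_space.rank (dim_row A) A"

end

theory Submission
  imports Defs
begin

text \<open>Every entry of \<M>(P) is a polynomial in the entries of P, and every column of \<M>(P) is the
  vectorisation of a symmetric D \<times> D matrix, so rank \<M>(P) \<le> D(D+1)/2 for all P.
  If some P0 attains this bound, choose D(D+1)/2 columns that are independent at P0.
  Their Gram determinant is a polynomial in P that does not vanish at P0, and a nonzero
  polynomial vanishes only on a Lebesgue null set (induction on the number of variables, using
  Fubini and the finiteness of the root set in the last variable). Wherever the Gram determinant
  is nonzero the chosen columns stay independent, so the rank is D(D+1)/2 almost everywhere.\<close>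

inductive polyfun :: "'i set \<Rightarrow> (('i \<Rightarrow> real) \<Rightarrow> real) \<Rightarrow> bool" for I where
  polyfun_const: "polyfun I (\<lambda>x. c)"
| polyfun_var: "i \<in> I \<Longrightarrow> polyfun I (\<lambda>x. x i)"
| polyfun_add: "polyfun I f \<Longrightarrow> polyfun I g \<Longrightarrow> polyfun I (\<lambda>x. f x + g x)"
| polyfun_mult: "polyfun I f \<Longrightarrow> polyfun I g \<Longrightarrow> polyfun I (\<lambda>x. f x * g x)"

lemma polyfun_sum:
  "finite S \<Longrightarrow> (\<And>a. a \<in> S \<Longrightarrow> polyfun I (f a)) \<Longrightarrow> polyfun I (\<lambda>x. \<Sum>a\<in>S. f a x)"
  by (induction S rule: finite_induct) (auto intro: polyfun.intros)

lemma polyfun_prod: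
  "finite S \<Longrightarrow> (\<And>a. a \<in> S \<Longrightarrow> polyfun I (f a)) \<Longrightarrow> polyfun I (\<lambda>x. \<Prod>a\<in>S. f a x)"
  by (induction S rule: finite_induct) (auto intro: polyfun.intros)

lemma polyfun_cong: "polyfun I f \<Longrightarrow> (\<And>j. j \<in> I \<Longrightarrow> x j = y j) \<Longrightarrow> f x = f y"
  by (induction rule: polyfun.induct) auto

lemma polyfun_measurable:
  "polyfun I f \<Longrightarrow> I \<subseteq> J \<Longrightarrow> f \<in> borel_measurable (PiM J (\<lambda>_. lborel))"
  by (induction rule: polyfun.induct) (auto intro: measurable_component_singleton)

lemma polyfun_det:
  assumes "\<And>x. A x \<in> carrier_mat n n"
    and "\<And>i j. i < n \<Longrightarrow> j < n \<Longrightarrow> polyfun I (\<lambda>x. A x $$ (i, j))"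
  shows "polyfun I (\<lambda>x. det (A x))"
  unfolding det_def'[OF assms(1)]
  by (intro polyfun_sum polyfun_mult polyfun_const polyfun_prod assms(2))
     (auto simp: finite_permutations permutes_in_image)

lemma polyfun_insert_poly:
  assumes "polyfun (insert i I) f"
  obtains p where "\<And>k. polyfun I (\<lambda>x. coeff (p x) k)" "\<And>x. f x = poly (p x) (x i)"
proof -
  from assms have "\<exists>p. (\<forall>k. polyfun I (\<lambda>x. coeff (p x) k)) \<and> (\<forall>x. f x = poly (p x) (x i))"
  proof (induction rule: polyfun.induct)
    case (polyfun_const c)
    show ?case
      by (rule exI[of _ "\<lambda>x. [:c:]"]) (auto simp: coeff_pCons split: nat.split intro: polyfun.intros)
  next
    case (polyfun_var j)
    show ?case
    proof (cases "j = i")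
      case True
      then show ?thesis
        by (intro exI[of _ "\<lambda>x. [:0, 1:]"]) (auto simp: coeff_pCons split: nat.split intro: polyfun.intros)
    next
      case False
      with polyfun_var have "polyfun I (\<lambda>x. coeff [:x j:] k)" for k
        by (cases k) (auto intro: polyfun.intros)
      then show ?thesis by (intro exI[of _ "\<lambda>x. [:x j:]"]) auto
    qed
  next
    case (polyfun_add f g)
    then obtain p q where "\<forall>k. polyfun I (\<lambda>x. coeff (p x) k)" "\<forall>x. f x = poly (p x) (x i)"
      "\<forall>k. polyfun I (\<lambda>x. coeff (q x) k)" "\<forall>x. g x = poly (q x) (x i)" by blast
    then show ?case by (intro exI[of _ "\<lambda>x. p x + q x"]) (auto intro: polyfun.intros)
  next
    case (polyfun_mult f g)
    then obtain p q where "\<forall>k. polyfun I (\<lambda>x. coeff (p x) k)" "\<forall>x. f x = poly (p x) (x i)"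
      "\<forall>k. polyfun I (\<lambda>x. coeff (q x) k)" "\<forall>x. g x = poly (q x) (x i)" by blast
    then show ?case
      by (intro exI[of _ "\<lambda>x. p x * q x"]) (auto simp: coeff_mult intro!: polyfun_sum polyfun.intros)
  qed
  then show thesis using that by blast
qed

lemma AE_PiM_insert:
  fixes M :: "'i \<Rightarrow> 'a measure"
  assumes "finite I" "i \<notin> I" "\<And>j. sigma_finite_measure (M j)"
    and P: "Measurable.pred (PiM (insert i I) M) P"
    and AE: "AE y in PiM I M. AE z in PiM {i} M. P (merge I {i} (y, z))"
  shows "AE x in PiM (insert i I) M. P x"
proof -
  interpret product_sigma_finite M by (simp add: product_sigma_finite_def assms(3))
  interpret I: finite_product_sigma_finite M I by standard (rule assms(1))
  interpret i: finite_product_sigma_finite M "{i}" by standard simp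
  interpret pair_sigma_finite "PiM I M" "PiM {i} M" by standard
  have P': "Measurable.pred (PiM (I \<union> {i}) M) P" using P by simp
  have "AE x in PiM I M \<Otimes>\<^sub>M PiM {i} M. P (merge I {i} x)"
    by (rule AE_pair_measure[OF _ AE[unfolded split_paired_all]]) (use P' in measurable)
  then have "AE x in distr (PiM I M \<Otimes>\<^sub>M PiM {i} M) (PiM (I \<union> {i}) M) (merge I {i}). P x"
    by (subst AE_distr_iff) (use P' in measurable)
  also have "distr (PiM I M \<Otimes>\<^sub>M PiM {i} M) (PiM (I \<union> {i}) M) (merge I {i}) = PiM (I \<union> {i}) M"
    by (rule distr_merge) (use assms(1,2) in auto)
  finally show ?thesis unfolding Un_insert_right Un_empty_right .
qed

lemma AE_poly_nonzero:
  fixes p :: "real poly"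
  assumes "p \<noteq> 0"
  shows "AE z in PiM {i} (\<lambda>_. lborel). poly p (z i) \<noteq> 0"
proof -
  interpret finite_product_sigma_finite "\<lambda>_. lborel" "{i}" by standard simp
  define R where "R = {t. poly p t = 0}"
  have "R \<in> null_sets lborel"
    unfolding R_def using poly_roots_finite[OF assms] by (rule finite_imp_null_set_lborel)
  then have "PiE {i} (\<lambda>_. R) \<in> null_sets (PiM {i} (\<lambda>_. lborel))"
    by (auto simp: null_sets_def emeasure_PiM intro!: sets_PiM_I_finite)
  moreover have "{z \<in> space (PiM {i} (\<lambda>_. lborel)). \<not> poly p (z i) \<noteq> 0} \<subseteq> PiE {i} (\<lambda>_. R)"
    by (auto simp: R_def space_PiM PiE_iff extensional_def)
  ultimately show ?thesis by (rule AE_I')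
qed

lemma AE_polyfun_nonzero:
  assumes "finite I" "polyfun I f" "x0 \<in> PiE I (\<lambda>_. UNIV)" "f x0 \<noteq> 0"
  shows "AE x in PiM I (\<lambda>_. lborel). f x \<noteq> 0"
  using assms
proof (induction I arbitrary: f x0 rule: finite_induct)
  case empty
  have "f x \<noteq> 0" for x using polyfun_cong[OF empty(1), of x x0] empty(3) by simp
  then show ?case by simp
next
  case (insert i I)
  obtain p where p_coeff: "\<And>k. polyfun I (\<lambda>x. coeff (p x) k)" and f_p: "\<And>x. f x = poly (p x) (x i)"
    using polyfun_insert_poly[OF insert(4)] by blast
  have p_cong: "p x = p y" if "\<And>j. j \<in> I \<Longrightarrow> x j = y j" for x y
    by (rule poly_eqI, rule polyfun_cong[OF p_coeff]) (use that in auto)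
  have "p x0 \<noteq> 0" using insert(6) f_p by auto
  then obtain k where "coeff (p x0) k \<noteq> 0" using leading_coeff_neq_0 by blast
  moreover have "p (restrict x0 I) = p x0" by (rule p_cong) simp
  ultimately have "coeff (p (restrict x0 I)) k \<noteq> 0" by simp
  then have "AE y in PiM I (\<lambda>_. lborel). coeff (p y) k \<noteq> 0"
    by (rule insert(3)[OF p_coeff, rotated]) auto
  then have AE: "AE y in PiM I (\<lambda>_. lborel). AE z in PiM {i} (\<lambda>_. lborel). f (merge I {i} (y, z)) \<noteq> 0"
  proof (rule eventually_mono)
    fix y assume "coeff (p y) k \<noteq> 0"
    then have "AE z in PiM {i} (\<lambda>_. lborel). poly (p y) (z i) \<noteq> 0"
      by (intro AE_poly_nonzero) auto
    moreover have "f (merge I {i} (y, z)) = poly (p y) (z i)" for z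
    proof -
      have "p (merge I {i} (y, z)) = p y" by (rule p_cong) (simp add: merge_def)
      moreover have "merge I {i} (y, z) i = z i" using insert(2) by (simp add: merge_def)
      ultimately show ?thesis by (simp add: f_p)
    qed
    ultimately show "AE z in PiM {i} (\<lambda>_. lborel). f (merge I {i} (y, z)) \<noteq> 0" by simp
  qed
  have "f \<in> borel_measurable (PiM (insert i I) (\<lambda>_. lborel))"
    by (rule polyfun_measurable[OF insert(4) order_refl])
  then have "Measurable.pred (PiM (insert i I) (\<lambda>_. lborel)) (\<lambda>x. f x \<noteq> 0)" by measurable
  from AE_PiM_insert[OF insert(1,2) lborel.sigma_finite_measure_axioms this AE] show ?case .
qed

definition gram_det :: "nat \<Rightarrow> 'a::comm_ring_1 vec list \<Rightarrow> 'a" where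
  "gram_det n xs = det (transpose_mat (mat_of_cols n xs) * mat_of_cols n xs)"

lemma gram_mat_index:
  assumes "A \<in> carrier_mat n m" "a < m" "b < m"
  shows "(transpose_mat A * A) $$ (a, b) = (\<Sum>k<n. A $$ (k, a) * A $$ (k, b))"
  using assms by (auto simp: scalar_prod_def lessThan_atLeast0 intro!: sum.cong)

lemma self_scalar_prod_eq_0:
  fixes v :: "'a::linordered_idom vec"
  assumes "v \<bullet> v = 0"
  shows "v = 0\<^sub>v (dim_vec v)"
proof -
  have "(\<Sum>i\<in>{0..<dim_vec v}. v $ i * v $ i) = 0" using assms by (simp add: scalar_prod_def)
  then have "\<forall>i\<in>{0..<dim_vec v}. v $ i * v $ i = 0" by (subst (asm) sum_nonneg_eq_0_iff) auto
  then show ?thesis by (intro eq_vecI) auto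
qed

lemma gram_mult_vec_eq_0_iff:
  fixes A :: "'a::linordered_field mat"
  assumes A: "A \<in> carrier_mat n m" and v: "v \<in> carrier_vec m"
  shows "(transpose_mat A * A) *\<^sub>v v = 0\<^sub>v m \<longleftrightarrow> A *\<^sub>v v = 0\<^sub>v n"
proof -
  have Gv: "(transpose_mat A * A) *\<^sub>v v = transpose_mat A *\<^sub>v (A *\<^sub>v v)"
    using A v by (metis assoc_mult_mat_vec transpose_carrier_mat)
  have "(transpose_mat A *\<^sub>v (A *\<^sub>v v)) \<bullet> v = (A *\<^sub>v v) \<bullet> (A *\<^sub>v v)"
    using A v by (intro transpose_vec_mult_scalar) auto
  then have "(transpose_mat A * A) *\<^sub>v v = 0\<^sub>v m \<Longrightarrow> A *\<^sub>v v = 0\<^sub>v n"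
    using A v self_scalar_prod_eq_0[of "A *\<^sub>v v"] by (auto simp: Gv)
  moreover have "A *\<^sub>v v = 0\<^sub>v n \<Longrightarrow> (transpose_mat A * A) *\<^sub>v v = 0\<^sub>v m"
    using A by (auto simp: Gv intro!: eq_vecI)
  ultimately show ?thesis by blast
qed

lemma gram_det_eq_0_iff:
  fixes xs :: "'a::linordered_field vec list"
  shows "gram_det n xs = 0 \<longleftrightarrow>
    (\<exists>v \<in> carrier_vec (length xs). v \<noteq> 0\<^sub>v (length xs) \<and> mat_of_cols n xs *\<^sub>v v = 0\<^sub>v n)"
proof -
  let ?A = "mat_of_cols n xs"
  have A: "?A \<in> carrier_mat n (length xs)" by simp
  then have G: "transpose_mat ?A * ?A \<in> carrier_mat (length xs) (length xs)" by auto
  show ?thesis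
    unfolding gram_det_def det_0_iff_vec_prod_zero_field[OF G] using gram_mult_vec_eq_0_iff[OF A] by blast
qed

lemma gram_det_eq_0_if_not_distinct:
  assumes xs: "set xs \<subseteq> carrier_vec n" and "\<not> distinct xs"
  shows "gram_det n xs = 0"
proof -
  let ?A = "mat_of_cols n xs" and ?m = "length xs"
  obtain a b where ab: "a \<noteq> b" "a < ?m" "b < ?m" "xs ! a = xs ! b"
    using assms(2) distinct_conv_nth by blast
  have "col ?A i = xs ! i" if "i < ?m" for i using xs that by (intro col_mat_of_cols) auto
  then have "col (transpose_mat ?A * ?A) a = col (transpose_mat ?A * ?A) b"
    using ab by (intro eq_vecI) simp_all
  moreover have "transpose_mat ?A * ?A \<in> carrier_mat ?m ?m" by auto
  ultimately show ?thesis unfolding gram_det_def using det_identical_cols ab(1-3) by blast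
qed

lemma lin_dep_iff_mat_of_cols_kernel:
  fixes xs :: "'a::field vec list"
  assumes xs: "set xs \<subseteq> carrier_vec n" "distinct xs"
  shows "module.lin_dep class_ring (module_vec TYPE('a) n) (set xs) \<longleftrightarrow>
    (\<exists>v \<in> carrier_vec (length xs). v \<noteq> 0\<^sub>v (length xs) \<and> mat_of_cols n xs *\<^sub>v v = 0\<^sub>v n)"
proof -
  let ?A = "mat_of_cols n xs"
  have A: "?A \<in> carrier_mat n (length xs)" by simp
  have cols: "cols ?A = xs" using xs by simp
  then show ?thesis
    using vec_space.lin_depE[OF A] vec_space.lin_depI[OF A] xs(2) by metis
qed

lemma gram_det_nonzero_iff:
  fixes xs :: "'a::linordered_field vec list"
  assumes "set xs \<subseteq> carrier_vec n"
  shows "gram_det n xs \<noteq> 0 \<longleftrightarrow>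
    distinct xs \<and> \<not> module.lin_dep class_ring (module_vec TYPE('a) n) (set xs)"
  using assms gram_det_eq_0_iff gram_det_eq_0_if_not_distinct lin_dep_iff_mat_of_cols_kernel
  by metis

lemma (in vec_space) lin_indpt_cols_of_le_rank:
  assumes A: "A \<in> carrier_mat n nc" and m: "m \<le> rank A"
  obtains xs where "distinct xs" "length xs = m" "set xs \<subseteq> set (cols A)" "lin_indpt (set xs)"
proof -
  obtain S where S: "maximal S (\<lambda>T. T \<subseteq> set (cols A) \<and> lin_indpt T)"
    using maximal_exists[of "(\<lambda>T. T \<subseteq> set (cols A) \<and> lin_indpt T)" "card (set (cols A))" "{}"]
    by (meson List.finite_set card_mono empty_iff empty_subsetI finite_lin_indpt2 rev_finite_subset)
  have Ssub: "S \<subseteq> set (cols A)" and Sli: "lin_indpt S" using S by (auto simp: maximal_def)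
  have "m \<le> card S" using m rank_card_indpt[OF A S] by simp
  then obtain S' where S': "S' \<subseteq> S" "card S' = m" by (rule obtain_subset_with_card_n)
  have "finite S'" by (rule rev_finite_subset[OF List.finite_set]) (use S'(1) Ssub in blast)
  then obtain xs where xs: "set xs = S'" "distinct xs" using finite_distinct_list by blast
  show thesis
  proof (rule that)
    show "length xs = m" using distinct_card[OF xs(2)] xs(1) S'(2) by simp
    show "set xs \<subseteq> set (cols A)" using xs(1) S'(1) Ssub by blast
    show "lin_indpt (set xs)" using subset_li_is_li[OF Sli S'(1)] xs(1) by simp
  qed (rule xs(2))
qed

lemma rank_ge_iff_gram_det:
  fixes M :: "'a::linordered_field mat"
  assumes M: "M \<in> carrier_mat n nc"
  shows "r \<le> vec_space.rank n M \<longleftrightarrow>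
    (\<exists>js. length js = r \<and> set js \<subseteq> {..<nc} \<and> gram_det n (map (col M) js) \<noteq> 0)"
proof
  assume "r \<le> vec_space.rank n M"
  then obtain xs where xs: "distinct xs" "length xs = r" "set xs \<subseteq> set (cols M)"
    "\<not> module.lin_dep class_ring (module_vec TYPE('a) n) (set xs)"
    using vec_space.lin_indpt_cols_of_le_rank[OF M] by blast
  have "\<exists>j. j < nc \<and> x = col M j" if "x \<in> set xs" for x
  proof -
    have "x \<in> set (cols M)" using that xs(3) by blast
    then obtain j where "j < length (cols M)" "x = cols M ! j"
      unfolding in_set_conv_nth by blast
    then show ?thesis using M by auto
  qed
  then obtain f where f: "\<forall>x\<in>set xs. f x < nc \<and> x = col M (f x)"
    using bchoice[of "set xs" "\<lambda>x j. j < nc \<and> x = col M j"] by blast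
  then have "map (col M) (map f xs) = xs" by (simp add: map_idI)
  moreover have "set xs \<subseteq> carrier_vec n" using xs(3) cols_dim[of M] M by auto
  then have "gram_det n xs \<noteq> 0" using xs(1,4) by (simp add: gram_det_nonzero_iff)
  moreover have "set (map f xs) \<subseteq> {..<nc}" using f by auto
  ultimately show "\<exists>js. length js = r \<and> set js \<subseteq> {..<nc} \<and> gram_det n (map (col M) js) \<noteq> 0"
    using xs(2) by (intro exI[of _ "map f xs"]) simp
next
  assume "\<exists>js. length js = r \<and> set js \<subseteq> {..<nc} \<and> gram_det n (map (col M) js) \<noteq> 0"
  then obtain js where js: "length js = r" "set js \<subseteq> {..<nc}" "gram_det n (map (col M) js) \<noteq> 0"
    by blast
  let ?xs = "map (col M) js"
  have sub: "set ?xs \<subseteq> set (cols M)" using js(2) M by (auto simp: cols_def)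
  then have "set ?xs \<subseteq> carrier_vec n" using M cols_dim by blast
  then have "distinct ?xs" "\<not> module.lin_dep class_ring (module_vec TYPE('a) n) (set ?xs)"
    using gram_det_nonzero_iff js(3) by blast+
  then have "card (set ?xs) \<le> vec_space.rank n M"
    using vec_space.rank_ge_card_indpt[OF M sub] by blast
  then show "r \<le> vec_space.rank n M"
    using distinct_card[OF \<open>distinct ?xs\<close>] js(1) by simp
qed

text \<open>Padding the rows indexed by U with zero rows gives a singular square matrix.\<close>
lemma ex_nonzero_vec_mult_vanishing_on_rows:
  fixes A :: "'a::field mat"
  assumes A: "A \<in> carrier_mat n m" and U: "U \<subseteq> {..<n}" "card U < m"
  obtains v where "v \<in> carrier_vec m" "v \<noteq> 0\<^sub>v m" "\<And>u. u \<in> U \<Longrightarrow> (A *\<^sub>v v) $ u = 0"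
proof -
  define r where "r = card U"
  have "finite U" using U(1) finite_subset by blast
  then obtain e where e: "bij_betw e {0..<r} U" unfolding r_def using ex_bij_betw_nat_finite by blast
  define B where "B = mat m m (\<lambda>(a, j). if a < r then A $$ (e a, j) else 0)"
  have B: "B \<in> carrier_mat m m" unfolding B_def by simp
  have zero_prod: "(\<Prod>i = 0..<m. B $$ (i, p i)) = 0" if "p permutes {0..<m}" for p
    using permutes_in_image[OF that, of r] U(2)
    by (intro prod_zero bexI[of _ r]) (auto simp: B_def r_def)
  have "det B = 0"
    unfolding det_def'[OF B] using zero_prod
    by (intro sum.neutral ballI) (metis mem_Collect_eq mult_zero_right)
  then obtain v where v: "v \<in> carrier_vec m" "v \<noteq> 0\<^sub>v m" "B *\<^sub>v v = 0\<^sub>v m"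
    using det_0_iff_vec_prod_zero_field[OF B] by blast
  have "(A *\<^sub>v v) $ u = 0" if u: "u \<in> U" for u
  proof -
    obtain a where a: "a < r" "u = e a" using e u by (auto simp: bij_betw_def)
    moreover have "a < m" using a(1) U(2) unfolding r_def by simp
    moreover have "row B a = row A u" using a U u A \<open>a < m\<close> by (intro eq_vecI) (auto simp: B_def)
    ultimately have "(A *\<^sub>v v) $ u = (B *\<^sub>v v) $ a" using U u A B by auto
    then show ?thesis using v(3) \<open>a < m\<close> by simp
  qed
  with v(1,2) show thesis by (rule that)
qed

lemma rank_le_card_if_rows_repeat:
  fixes M :: "'a::field mat"
  assumes M: "M \<in> carrier_mat n nc" and U: "U \<subseteq> {..<n}" and \<sigma>: "\<And>k. k < n \<Longrightarrow> \<sigma> k \<in> U"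
    and rows: "\<And>k j. k < n \<Longrightarrow> j < nc \<Longrightarrow> M $$ (k, j) = M $$ (\<sigma> k, j)"
  shows "vec_space.rank n M \<le> card U"
proof (rule ccontr)
  assume "\<not> vec_space.rank n M \<le> card U"
  then obtain xs where xs: "distinct xs" "length xs = Suc (card U)" "set xs \<subseteq> set (cols M)"
    "\<not> module.lin_dep class_ring (module_vec TYPE('a) n) (set xs)"
    using vec_space.lin_indpt_cols_of_le_rank[OF M, of "Suc (card U)"] by auto
  let ?A = "mat_of_cols n xs"
  have xs_carrier: "set xs \<subseteq> carrier_vec n" using xs(3) cols_dim[of M] M by auto
  have A: "?A \<in> carrier_mat n (length xs)" by simp
  have A_rows: "?A $$ (k, j) = ?A $$ (\<sigma> k, j)" if "k < n" "j < length xs" for k j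
  proof -
    have "xs ! j \<in> set (cols M)" using xs(3) that(2) by (metis nth_mem subsetD)
    then obtain c where "c < nc" "xs ! j = col M c" using M by (auto simp: cols_def)
    moreover have "\<sigma> k < n" using \<sigma> U that(1) by auto
    ultimately show ?thesis using that rows M by (simp add: mat_of_cols_index)
  qed
  obtain v where v: "v \<in> carrier_vec (length xs)" "v \<noteq> 0\<^sub>v (length xs)"
    and vanish: "\<And>u. u \<in> U \<Longrightarrow> (?A *\<^sub>v v) $ u = 0"
    using ex_nonzero_vec_mult_vanishing_on_rows[OF A U] xs(2) by auto
  have "?A *\<^sub>v v = 0\<^sub>v n"
  proof (rule eq_vecI)
    fix k assume "k < dim_vec (0\<^sub>v n)"
    then have k: "k < n" by simp
    moreover have "\<sigma> k < n" using \<sigma> U k by auto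
    ultimately have "(?A *\<^sub>v v) $ k = (?A *\<^sub>v v) $ (\<sigma> k)"
      using A_rows A v(1) by (auto simp: scalar_prod_def intro!: sum.cong)
    then show "(?A *\<^sub>v v) $ k = 0\<^sub>v n $ k" using vanish \<sigma> k by simp
  qed simp
  then show False using lin_dep_iff_mat_of_cols_kernel[OF xs_carrier xs(1)] xs(4) v by blast
qed

lemma polyfun_gram_det:
  assumes M: "\<And>x. M x \<in> carrier_mat n m" and js: "set js \<subseteq> {..<m}"
    and poly: "\<And>k j. k < n \<Longrightarrow> j < m \<Longrightarrow> polyfun I (\<lambda>x. M x $$ (k, j))"
  shows "polyfun I (\<lambda>x. gram_det n (map (col (M x)) js))"
proof -
  let ?A = "\<lambda>x. mat_of_cols n (map (col (M x)) js)"
  have A: "?A x \<in> carrier_mat n (length js)" for x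
    using mat_of_cols_carrier(1)[of n "map (col (M x)) js"] by simp
  have entry: "polyfun I (\<lambda>x. ?A x $$ (k, a))" if "k < n" "a < length js" for k a
  proof -
    have "js ! a < m" using js that(2) nth_mem by blast
    moreover have "?A x $$ (k, a) = M x $$ (k, js ! a)" for x
      using that M[of x] \<open>js ! a < m\<close> by (simp add: mat_of_cols_index)
    ultimately show ?thesis using poly that(1) by simp
  qed
  have "polyfun I (\<lambda>x. (transpose_mat (?A x) * ?A x) $$ (a, b))"
    if "a < length js" "b < length js" for a b
    unfolding gram_mat_index[OF A that] using that
    by (intro polyfun_sum polyfun_mult entry) auto
  then show ?thesis unfolding gram_det_def by (intro polyfun_det) auto
qed

lemma AE_rank_ge_if_polyfun:
  fixes M :: "('i \<Rightarrow> real) \<Rightarrow> real mat"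
  assumes I: "finite I" and M: "\<And>x. M x \<in> carrier_mat n m"
    and poly: "\<And>k j. k < n \<Longrightarrow> j < m \<Longrightarrow> polyfun I (\<lambda>x. M x $$ (k, j))"
    and x0: "x0 \<in> PiE I (\<lambda>_. UNIV)" "r \<le> vec_space.rank n (M x0)"
  shows "AE x in PiM I (\<lambda>_. lborel). r \<le> vec_space.rank n (M x)"
proof -
  obtain js where js: "length js = r" "set js \<subseteq> {..<m}" "gram_det n (map (col (M x0)) js) \<noteq> 0"
    using x0(2) rank_ge_iff_gram_det[OF M] by blast
  have "AE x in PiM I (\<lambda>_. lborel). gram_det n (map (col (M x)) js) \<noteq> 0"
    using AE_polyfun_nonzero[OF I polyfun_gram_det[OF M js(2) poly] x0(1)] js(3) by simp
  then show ?thesis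
    by (rule eventually_mono) (use js rank_ge_iff_gram_det[OF M] in blast)
qed

lemma polyfun_rank_dichotomy:
  fixes M :: "('i \<Rightarrow> real) \<Rightarrow> real mat"
  assumes I: "finite I" and M: "\<And>x. M x \<in> carrier_mat n m"
    and poly: "\<And>k j. k < n \<Longrightarrow> j < m \<Longrightarrow> polyfun I (\<lambda>x. M x $$ (k, j))"
    and le: "\<And>x. vec_space.rank n (M x) \<le> r"
  shows "(\<forall>x \<in> PiE I (\<lambda>_. UNIV). vec_space.rank n (M x) < r)
    \<or> (AE x in PiM I (\<lambda>_. lborel). vec_space.rank n (M x) = r)"
proof (cases "\<exists>x0 \<in> PiE I (\<lambda>_. UNIV). r \<le> vec_space.rank n (M x0)")
  case True
  then obtain x0 where "x0 \<in> PiE I (\<lambda>_. UNIV)" "r \<le> vec_space.rank n (M x0)" by blast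
  from AE_rank_ge_if_polyfun[OF I M poly this]
  have "AE x in PiM I (\<lambda>_. lborel). r \<le> vec_space.rank n (M x)" .
  then have "AE x in PiM I (\<lambda>_. lborel). vec_space.rank n (M x) = r"
    by (rule eventually_mono) (use le antisym in blast)
  then show ?thesis ..
qed (auto simp: not_le)

lemma Dmat_index:
  assumes "a < W" "b < VK"
  shows "Dmat D W VK P $$ (a, b) = (\<Sum>l<D. P (l, a) * P (l, W + b))"
  using assms by (auto simp: Dmat_def Pst_def Pm_def scalar_prod_def lessThan_atLeast0 intro!: sum.cong)

lemma polyfun_Dmat_index:
  assumes "a < W" "b < VK"
  shows "polyfun ({..<D} \<times> {..<W + VK}) (\<lambda>P. Dmat D W VK P $$ (a, b))"
  unfolding Dmat_index[OF assms] using assms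
  by (intro polyfun_sum polyfun_mult polyfun_var) auto

lemma Nmat_index:
  assumes "r < D" "c < D"
  shows "Nmat s D Dm ab $$ (r, c) = (case s of
     St \<Rightarrow> (1/2) * (Dm $$ (fst ab, r) * Dm $$ (snd ab, c) + Dm $$ (snd ab, r) * Dm $$ (fst ab, c))
   | Mm \<Rightarrow> (1/2) * (Dm $$ (r, fst ab) * Dm $$ (c, snd ab) + Dm $$ (r, snd ab) * Dm $$ (c, fst ab)))"
  using assms by (cases s) (auto simp: Nmat_def)

lemma Nmat_symmetric:
  assumes "r < D" "c < D"
  shows "Nmat s D Dm ab $$ (r, c) = Nmat s D Dm ab $$ (c, r)"
  using assms by (cases s) (auto simp: Nmat_index algebra_simps)

lemma polyfun_Nmat_index:
  assumes "r < D" "c < D"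
    and ab: "case s of St \<Rightarrow> fst ab < W \<and> snd ab < W | Mm \<Rightarrow> fst ab < VK \<and> snd ab < VK"
    and D: "case s of St \<Rightarrow> D \<le> VK | Mm \<Rightarrow> D \<le> W"
  shows "polyfun ({..<D} \<times> {..<W + VK}) (\<lambda>P. Nmat s D (Dmat D W VK P) ab $$ (r, c))"
proof (cases s)
  case St
  then have "fst ab < W" "snd ab < W" "r < VK" "c < VK" using ab D assms(1,2) by auto
  then show ?thesis unfolding Nmat_index[OF assms(1,2)] St sharp.case
    by (intro polyfun_mult polyfun_add polyfun_const polyfun_Dmat_index)
next
  case Mm
  then have "fst ab < VK" "snd ab < VK" "r < W" "c < W" using ab D assms(1,2) by auto
  then show ?thesis unfolding Nmat_index[OF assms(1,2)] Mm sharp.case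
    by (intro polyfun_mult polyfun_add polyfun_const polyfun_Dmat_index)
qed

lemma Mmat_carrier: "Mmat s D W VK J theta P \<in> carrier_mat (D * D) J"
  by (metis Mmat_def length_map length_upt minus_nat.diff_0 mat_of_cols_carrier(1))

lemma Mmat_index:
  assumes "k < D * D" "j < J"
  shows "Mmat s D W VK J theta P $$ (k, j) = Nmat s D (Dmat D W VK P) (theta j) $$ (k mod D, k div D)"
proof -
  have "dim_row (Nmat s D Dm ab) = D" "dim_col (Nmat s D Dm ab) = D" for Dm ab
    by (cases s; simp add: Nmat_def)+
  then show ?thesis using assms by (simp add: Mmat_def mat_of_cols_index vecm_def)
qed

lemma index_pair_less:
  assumes "a < D" "b < D"
  shows "a + D * b < D * (D::nat)"
proof -
  have "a + D * b < D * Suc b" using assms(1) by simp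
  also have "\<dots> \<le> D * D" using assms(2) by (intro mult_le_mono2) simp
  finally show ?thesis .
qed

lemma card_upper_triangle: "card {k. k < D * D \<and> k mod D \<le> k div D} = D * (D + 1) div (2::nat)"
proof -
  let ?pair = "\<lambda>(b, a). a + D * b" and ?T = "SIGMA b:{..<D}. {..b}"
  have "{k. k < D * D \<and> k mod D \<le> k div D} = ?pair ` ?T"
  proof (intro equalityI subsetI)
    fix k assume "k \<in> {k. k < D * D \<and> k mod D \<le> k div D}"
    then have "k div D < D" "k mod D \<le> k div D" by (auto simp: less_mult_imp_div_less)
    then show "k \<in> ?pair ` ?T" by (intro image_eqI[of _ _ "(k div D, k mod D)"]) auto
  next
    fix k assume "k \<in> ?pair ` ?T"
    then obtain a b where "k = a + D * b" "b < D" "a \<le> b" by auto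
    then show "k \<in> {k. k < D * D \<and> k mod D \<le> k div D}" using index_pair_less by auto
  qed
  moreover have "inj_on ?pair ?T"
  proof (rule inj_onI, clarsimp)
    fix a b a' b' assume "b < D" "a \<le> b" "b' < D" "a' \<le> b'" "a + D * b = a' + D * b'"
    then have "(a + D * b) mod D = (a' + D * b') mod D" "(a + D * b) div D = (a' + D * b') div D"
      by simp_all
    with \<open>b < D\<close> \<open>a \<le> b\<close> \<open>b' < D\<close> \<open>a' \<le> b'\<close> show "b = b' \<and> a = a'" by simp
  qed
  moreover have "card ?T = (\<Sum>b<D. Suc b)" by (simp add: card_SigmaI)
  moreover have "2 * (\<Sum>b<D. Suc b) = D * (D + 1)" by (induction D) auto
  ultimately show ?thesis by (simp add: card_image)
qed

lemma rank_Mmat_le: "vec_space.rank (D * D) (Mmat s D W VK J theta P) \<le> D * (D + 1) div 2"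
proof -
  let ?U = "{k. k < D * D \<and> k mod D \<le> k div D}"
  define \<sigma> where "\<sigma> k = (if k mod D \<le> k div D then k else k div D + D * (k mod D))" for k
  have "vec_space.rank (D * D) (Mmat s D W VK J theta P) \<le> card ?U"
  proof (rule rank_le_card_if_rows_repeat[OF Mmat_carrier])
    fix k assume k: "k < D * D"
    then have "D > 0" by (cases D) auto
    with k have ab: "k mod D < D" "k div D < D" by (auto simp: less_mult_imp_div_less)
    then show "\<sigma> k \<in> ?U" using k index_pair_less[OF ab(2,1)] by (auto simp: \<sigma>_def)
    fix j assume "j < J"
    then show "Mmat s D W VK J theta P $$ (k, j) = Mmat s D W VK J theta P $$ (\<sigma> k, j)"
      using k ab index_pair_less[OF ab(2,1)]
      by (auto simp: \<sigma>_def Mmat_index intro: Nmat_symmetric)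
  qed auto
  then show ?thesis by (simp add: card_upper_triangle)
qed

theorem theorem3:
  fixes D W V K J :: nat and s :: sharp and theta :: "nat \<Rightarrow> nat \<times> nat"
  assumes "D > 0" and "W > 0" and "V > 0" and "K > 0"
    and "\<forall>j<J. (case s of
            St \<Rightarrow> fst (theta j) < W \<and> snd (theta j) < W
          | Mm \<Rightarrow> fst (theta j) < V * K \<and> snd (theta j) < V * K)"
    and "(case s of St \<Rightarrow> D \<le> V * K | Mm \<Rightarrow> D \<le> W)"
  shows "(\<forall>P \<in> PiE ({..<D} \<times> {..<W + V * K}) (\<lambda>_. UNIV).
            mrank (Mmat s D W (V * K) J theta P) < D * (D + 1) div 2)
       \<or> (AE P in PiM ({..<D} \<times> {..<W + V * K}) (\<lambda>_. lborel).
            mrank (Mmat s D W (V * K) J theta P) = D * (D + 1) div 2)"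
proof -
  let ?I = "{..<D} \<times> {..<W + V * K}" and ?M = "Mmat s D W (V * K) J theta"
  have "polyfun ?I (\<lambda>P. ?M P $$ (k, j))" if "k < D * D" "j < J" for k j
  proof -
    have "k mod D < D" "k div D < D" using that assms(1) by (auto simp: less_mult_imp_div_less)
    then show ?thesis unfolding Mmat_index[OF that]
      by (intro polyfun_Nmat_index) (use assms(5,6) that(2) in auto)
  qed
  then have "(\<forall>P \<in> PiE ?I (\<lambda>_. UNIV). vec_space.rank (D * D) (?M P) < D * (D + 1) div 2)
    \<or> (AE P in PiM ?I (\<lambda>_. lborel). vec_space.rank (D * D) (?M P) = D * (D + 1) div 2)"
    by (intro polyfun_rank_dichotomy[OF _ Mmat_carrier] rank_Mmat_le) auto
  moreover have "mrank (?M P) = vec_space.rank (D * D) (?M P)" for P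
    using Mmat_carrier[of s D W "V * K" J theta P] by (simp add: mrank_def)
  ultimately show ?thesis by simp
qed

end
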